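(* Let $\mathcal{O}$ be a shuffle operad with monomial relations generated by unary operations, i.e. an associative algebra $\mathbb{k}\langle x_1,\dots,x_n\rangle/(\mathcal{G})$ with $\mathcal{G}$ a set of monomials (words); tree monomials are words and divisors are occurrences of subwords. Number the divisors of a word $T$ that are relations (occurrences of elements of $\mathcal{G}$) according to the position of their first letter; this is an Anick numbering. For this numbering, the basis elements $v=T\otimes S_{i_1}\wedge\cdots\wedge S_{i_q}$ of $(\mathcal{A}_\mathcal{G})^{ab}_T$ satisfying conditions (I) and (II) below are precisely the elements $m\otimes S_1\wedge\cdots\wedge S_q$ where $m$ is an Anick $q$-chain and $S_1,\dots,S_q$ are the relations linked to form it (for $q=0$, the generators $x_i\otimes 1$): (I) for each $S_j$ present in $v$, $\partial_j(v)$ is decomposable; (II) for each $S_j$ not present in $v$, there exists $i<j$ with $\partial_i(v\wedge S_j)$ indecomposable.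
   Context: For a word $T$ with relation occurrences $S_1,\dots,S_p$, consider elements $T\otimes S_{i_1}\wedge\cdots\wedge S_{i_q}$ of $\mathbb{k}T\otimes\Lambda(S_1,\dots,S_p)$ (exterior algebra, $S_i$ of degree $1$) with degree $-1$ derivations $\partial_i$, $\partial_i(S_j)=\delta_{ij}$. Such an element is indecomposable if every pair of consecutive letters of $T$ lies inside (and not as the last/first letter boundary of) at least one of $S_{i_1},\dots,S_{i_q}$, i.e. every edge between two consecutive letters of $T$ is an internal edge of one of these occurrences; otherwise it is decomposable. $(\mathcal{A}_\mathcal{G})^{ab}_T$ has as basis the indecomposable such elements. An Anick numbering is a numbering of the relation occurrences such that $i<j<k$ and $S_i\cap S_j\ne\varnothing$ imply $S_i\cap S_k\subset S_j\cap S_k$. Anick chains and their tails are defined inductively: each generator $x_i$ is a $0$-chain equal to its tail; a $q$-chain ($q\ge1$) is a monomial $m=nst$, where $t$ is its tail, $ns$ is a $(q-1)$-chain with tail $s$, and $st$ has exactly one divisor which is a relation from $\mathcal{G}$, this divisor being a right divisor (suffix) of $st$. The relations linked in $m$ are the occurrences of relations created at each step of this inductive construction. *)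

theory Defs
  imports Main "HOL-Library.Sublist"
begin

text \<open>Words over the alphabet 'a (the generators x_1..x_n). An occurrence (divisor) of a relation in a word T is encoded as a pair (p, l):
the subword of T of length l starting at position p (0-based) is an element of G.\<close>

definition occs :: "'a list set \<Rightarrow> 'a list \<Rightarrow> (nat \<times> nat) set" where
  "occs G T = {(p, l). p + l \<le> length T \<and> take l (drop p T) \<in> G}"

definition occ_pos :: "nat \<times> nat \<Rightarrow> nat set" where
  "occ_pos oc = {fst oc ..< fst oc + snd oc}"

text \<open>The edge between letters k and k+1 is an internal edge of occurrence o.\<close>
definition internal_edge :: "nat \<Rightarrow> nat \<times> nat \<Rightarrow> bool" where
  "internal_edge k oc \<longleftrightarrow> fst oc \<le> k \<and> k + 1 < fst oc + snd oc"

definition indecomposable :: "'a list \<Rightarrow> (nat \<times> nat) set \<Rightarrow> bool" where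
  "indecomposable T I \<longleftrightarrow> (\<forall>k. k + 1 < length T \<longrightarrow> (\<exists>oc\<in>I. internal_edge k oc))"

text \<open>Anick numbering, for a numbering given as a strict order "lt" on the occurrences O.\<close>
definition anick_numbering :: "(nat \<times> nat) set \<Rightarrow> (nat \<times> nat \<Rightarrow> nat \<times> nat \<Rightarrow> bool) \<Rightarrow> bool" where
  "anick_numbering Os lt \<longleftrightarrow>
     (\<forall>a\<in>Os. \<forall>b\<in>Os. \<forall>c\<in>Os. lt a b \<longrightarrow> lt b c \<longrightarrow> occ_pos a \<inter> occ_pos b \<noteq> {} \<longrightarrow>
        occ_pos a \<inter> occ_pos c \<subseteq> occ_pos b \<inter> occ_pos c)"

definition first_letter_less :: "nat \<times> nat \<Rightarrow> nat \<times> nat \<Rightarrow> bool" where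
  "first_letter_less a b \<longleftrightarrow> fst a < fst b"

text \<open>Condition (I): for each S_j present in v, \<partial>_j(v) = \<plusminus> T \<otimes> (I - {S_j}) is decomposable.\<close>
definition cond_I :: "'a list \<Rightarrow> (nat \<times> nat) set \<Rightarrow> bool" where
  "cond_I T I \<longleftrightarrow> (\<forall>j\<in>I. \<not> indecomposable T (I - {j}))"

text \<open>Condition (II): for each S_j not present in v there is S_i numbered before S_j with
\<partial>_i(v \<and> S_j) indecomposable; \<partial>_i(v \<and> S_j) is nonzero only if S_i occurs in v,
and then equals \<plusminus> T \<otimes> ((I \<union> {S_j}) - {S_i}).\<close>
definition cond_II :: "'a list set \<Rightarrow> 'a list \<Rightarrow> (nat \<times> nat) set \<Rightarrow> bool" where
  "cond_II G T I \<longleftrightarrow> (\<forall>j\<in>occs G T - I. \<exists>i\<in>I. first_letter_less i j \<and>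
       indecomposable T (insert j I - {i}))"

text \<open>Anick chains: anick_chain G q m t L means m is an Anick q-chain with tail t,
and L is the set of occurrences (in m) of the relations linked in m.\<close>
inductive anick_chain :: "'a list set \<Rightarrow> nat \<Rightarrow> 'a list \<Rightarrow> 'a list \<Rightarrow> (nat \<times> nat) set \<Rightarrow> bool"
  for G :: "'a list set" where
  zero: "anick_chain G 0 [x] [x] {}"
| step: "\<lbrakk> anick_chain G q (n @ s) s L; t \<noteq> []; r \<in> G; suffix r (s @ t);
           length t < length r;
           occs G (s @ t) = {(length (s @ t) - length r, length r)} \<rbrakk>
         \<Longrightarrow> anick_chain G (Suc q) (n @ s @ t) t
               (insert (length (n @ s @ t) - length r, length r) L)"

end

theory Submission
  imports Defs
begin

text \<open>Since no relation is a subword of another, distinct occurrences of relations are never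
  nested, so ordering occurrences by first letter is the same as ordering them by last letter;
  this gives the Anick property. For the characterisation one removes the relation ending at
  the last letter of \<open>T\<close>. Conditions (I) and (II) force it to start inside the previous relation
  but not before the end of the one before that, to be the only relation in the word from there
  on, and force the remaining relations to satisfy (I) and (II) in the prefix of \<open>T\<close> ending with
  the previous relation. This is exactly one step of the inductive definition of Anick chains,
  and conversely each such step preserves indecomposability, (I) and (II).\<close>

definition occ_end :: "nat \<times> nat \<Rightarrow> nat" where
  "occ_end oc = fst oc + snd oc"

text \<open>The empty set is given last end 1, the length of an Anick 0-chain.\<close>

definition last_end :: "(nat \<times> nat) set \<Rightarrow> nat" where
  "last_end I = (if I = {} then 1 else Max (occ_end ` I))"

definition earlier_occs :: "(nat \<times> nat) set \<Rightarrow> (nat \<times> nat) set" where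
  "earlier_occs I = {oc \<in> I. occ_end oc < last_end I}"

text \<open>Where the tail of the chain whose linked relations are \<open>I\<close> begins: at the end of the
  second to last relation (at 1 if there is only one, at 0 for a 0-chain).\<close>

definition tail_start :: "(nat \<times> nat) set \<Rightarrow> nat" where
  "tail_start I = (if I = {} then 0 else last_end (earlier_occs I))"

lemma occ_end_le_length: "oc \<in> occs G T \<Longrightarrow> occ_end oc \<le> length T"
  by (cases oc) (simp add: occs_def occ_end_def)

lemma finite_occs: "finite (occs G T)"
proof -
  have "occs G T \<subseteq> {0..length T} \<times> {0..length T}" by (auto simp: occs_def)
  then show ?thesis by (rule finite_subset) auto
qed

lemma occs_append: "oc \<in> occs G T \<Longrightarrow> oc \<in> occs G (T @ U)"
  by (cases oc) (auto simp: occs_def)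

lemma occs_appendD: "oc \<in> occs G (T @ U) \<Longrightarrow> occ_end oc \<le> length T \<Longrightarrow> oc \<in> occs G T"
  by (cases oc) (auto simp: occs_def occ_end_def)

lemma occs_take: "oc \<in> occs G T \<Longrightarrow> occ_end oc \<le> n \<Longrightarrow> oc \<in> occs G (take n T)"
  by (cases oc) (auto simp: occs_def occ_end_def take_drop min_def)

lemma occs_takeD: "oc \<in> occs G (take n T) \<Longrightarrow> oc \<in> occs G T"
  by (cases oc) (auto simp: occs_def take_drop min_def split: if_splits)

lemma occs_drop: "(p, l) \<in> occs G T \<Longrightarrow> b \<le> p \<Longrightarrow> (p - b, l) \<in> occs G (drop b T)"
  by (auto simp: occs_def)

lemma occs_dropD: "(p, l) \<in> occs G (drop b T) \<Longrightarrow> b \<le> length T \<Longrightarrow> (p + b, l) \<in> occs G T"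
  by (auto simp: occs_def add.commute)

lemma occs_drop_singletonD:
  assumes "occs G (drop b W) = {(p, l)}" and "j \<in> occs G W" and "b \<le> fst j"
  shows "j = (p + b, l)"
proof -
  have "(fst j, snd j) \<in> occs G W" using assms(2) by simp
  then have "(fst j - b, snd j) \<in> occs G (drop b W)" using assms(3) by (rule occs_drop)
  then show ?thesis using assms(1,3) by (cases j) auto
qed

lemma suffix_occs:
  assumes "r \<in> G" and "suffix r T"
  shows "(length T - length r, length r) \<in> occs G T"
proof -
  obtain zs where "T = zs @ r" using assms(2) by (auto simp: suffix_def)
  then show ?thesis using assms(1) by (simp add: occs_def)
qed

lemma indecomposableD:
  "indecomposable T I \<Longrightarrow> k + 1 < length T \<Longrightarrow> \<exists>oc\<in>I. internal_edge k oc"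
  unfolding indecomposable_def by blast

lemma cond_I_private_edge:
  assumes "indecomposable T I" and "cond_I T I" and "j \<in> I"
  obtains k where "k + 1 < length T" and "internal_edge k j"
    and "\<forall>oc\<in>I - {j}. \<not> internal_edge k oc"
proof -
  obtain k where k: "k + 1 < length T" and unc: "\<forall>oc\<in>I - {j}. \<not> internal_edge k oc"
    using assms(2,3) unfolding cond_I_def indecomposable_def by blast
  then have "internal_edge k j" using indecomposableD[OF assms(1) k] by blast
  then show thesis using that k unc by blast
qed

lemma occ_end_le_last_end: "finite I \<Longrightarrow> x \<in> I \<Longrightarrow> occ_end x \<le> last_end I"
  by (auto simp: last_end_def)

lemma last_end_attained:
  assumes "finite I" and "I \<noteq> {}"
  obtains l where "l \<in> I" and "occ_end l = last_end I"
proof -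
  have "Max (occ_end ` I) \<in> occ_end ` I" using assms by simp
  then obtain l where "l \<in> I" "occ_end l = Max (occ_end ` I)" by (rule imageE) simp
  with assms(2) show thesis by (intro that) (simp_all add: last_end_def)
qed

lemma last_end_le:
  assumes "finite I" and "I \<noteq> {}" and "\<And>x. x \<in> I \<Longrightarrow> occ_end x \<le> c"
  shows "last_end I \<le> c"
  using last_end_attained[OF assms(1,2)] assms(3) by metis

lemma earlier_occs_subset: "earlier_occs I \<subseteq> I"
  by (auto simp: earlier_occs_def)

lemma occ_end_le_tail_start:
  assumes "finite I" and x: "x \<in> earlier_occs I"
  shows "occ_end x \<le> tail_start I"
proof -
  have "occ_end x \<le> last_end (earlier_occs I)"
    using occ_end_le_last_end finite_subset[OF earlier_occs_subset] assms by blast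
  moreover have "I \<noteq> {}" using x earlier_occs_subset by blast
  ultimately show ?thesis by (simp add: tail_start_def)
qed

lemma
  assumes "finite L" and "\<And>x. x \<in> L \<Longrightarrow> occ_end x < occ_end new"
  shows last_end_insert_last: "last_end (insert new L) = occ_end new"
    and tail_start_insert_last: "tail_start (insert new L) = last_end L"
proof -
  show "last_end (insert new L) = occ_end new"
  proof (rule antisym)
    show "last_end (insert new L) \<le> occ_end new"
      using assms by (intro last_end_le) (auto intro: less_imp_le)
  qed (use assms(1) occ_end_le_last_end in blast)
  then have "earlier_occs (insert new L) = L"
    using assms(2) by (auto simp: earlier_occs_def)
  then show "tail_start (insert new L) = last_end L"
    by (simp add: tail_start_def)
qed

locale reduced_relations =
  fixes G :: "'a list set"
  assumes minimal: "\<forall>u\<in>G. \<forall>w\<in>G. sublist u w \<longrightarrow> u = w"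
begin

lemma occ_nested_eq:
  assumes a: "a \<in> occs G T" and b: "b \<in> occs G T"
    and "fst a \<le> fst b" and "occ_end b \<le> occ_end a"
  shows "a = b"
proof -
  obtain pa la where A: "a = (pa, la)" by (cases a)
  obtain pb lb where B: "b = (pb, lb)" by (cases b)
  have ha: "pa + la \<le> length T" "take la (drop pa T) \<in> G" using a A by (auto simp: occs_def)
  have hb: "pb + lb \<le> length T" "take lb (drop pb T) \<in> G" using b B by (auto simp: occs_def)
  have le: "pa \<le> pb" "pb + lb \<le> pa + la" using assms A B by (auto simp: occ_end_def)
  have eq: "take lb (drop pb T) = take lb (drop (pb - pa) (take la (drop pa T)))"
    using le by (simp add: drop_take take_take min_def)
  have "sublist (take lb (drop pb T)) (take la (drop pa T))"
    unfolding eq by (meson sublist_drop sublist_take sublist_order.order_trans)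
  then have "take lb (drop pb T) = take la (drop pa T)" using minimal ha hb by blast
  moreover have "length (take lb (drop pb T)) = lb" using hb(1) by simp
  moreover have "length (take la (drop pa T)) = la" using ha(1) by simp
  ultimately have "lb = la" by simp
  then show ?thesis using le A B by simp
qed

lemma occ_end_less_imp_fst_less:
  "a \<in> occs G T \<Longrightarrow> b \<in> occs G T \<Longrightarrow> occ_end a < occ_end b \<Longrightarrow> fst a < fst b"
  using occ_nested_eq[of b T a] by force

lemma fst_less_imp_occ_end_less:
  "a \<in> occs G T \<Longrightarrow> b \<in> occs G T \<Longrightarrow> fst a < fst b \<Longrightarrow> occ_end a < occ_end b"
  using occ_nested_eq[of a T b] by force

lemma occ_end_inj: "a \<in> occs G T \<Longrightarrow> b \<in> occs G T \<Longrightarrow> occ_end a = occ_end b \<Longrightarrow> a = b"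
  using occ_nested_eq[of a T b] occ_nested_eq[of b T a] by (cases "fst a \<le> fst b") auto

lemma inj_on_fst_occs: "inj_on fst (occs G T)"
proof (rule inj_onI)
  fix a b assume "a \<in> occs G T" "b \<in> occs G T" "fst a = fst b"
  then show "a = b"
    using occ_nested_eq[of a T b] occ_nested_eq[of b T a] by (cases "occ_end a \<le> occ_end b") auto
qed

lemma anick_numbering_first_letter: "anick_numbering (occs G T) first_letter_less"
  unfolding anick_numbering_def
proof (intro ballI impI)
  fix a b c assume a: "a \<in> occs G T" and b: "b \<in> occs G T"
    and ab: "first_letter_less a b" and bc: "first_letter_less b c"
  have "occ_end a < occ_end b"
    using fst_less_imp_occ_end_less[OF a b] ab by (simp add: first_letter_less_def)
  then show "occ_pos a \<inter> occ_pos c \<subseteq> occ_pos b \<inter> occ_pos c"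
    using ab bc unfolding occ_pos_def first_letter_less_def occ_end_def by auto
qed

lemma not_earlier_occ_eq:
  assumes "I \<subseteq> occs G T" and "finite I" and "l \<in> I" and "occ_end l = last_end I"
    and "x \<in> I" and "x \<notin> earlier_occs I"
  shows "x = l"
proof -
  have "occ_end x = last_end I"
    using assms(2,5,6) occ_end_le_last_end[of I x] by (simp add: earlier_occs_def)
  then show ?thesis using occ_end_inj assms by (metis subsetD)
qed

end

locale anick_relations = reduced_relations +
  assumes rel_len: "\<forall>w\<in>G. 2 \<le> length w"
begin

lemma two_le_occ_len: "oc \<in> occs G T \<Longrightarrow> 2 \<le> snd oc"
  using rel_len by (cases oc) (auto simp: occs_def)

lemma two_le_occ_end: "oc \<in> occs G T \<Longrightarrow> 2 \<le> occ_end oc"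
  using two_le_occ_len[of oc T] by (simp add: occ_end_def)

lemma occs_short: "length T \<le> 1 \<Longrightarrow> occs G T = {}"
  using occ_end_le_length[of _ G T] two_le_occ_end[of _ T] by fastforce

lemma one_le_last_end:
  assumes "finite I" and "I \<subseteq> occs G T"
  shows "1 \<le> last_end I"
proof (cases "I = {}")
  case False
  then obtain x where "x \<in> I" by blast
  then show ?thesis using assms two_le_occ_end[of x T] occ_end_le_last_end[of I x] by auto
qed (simp add: last_end_def)

lemma one_le_tail_start:
  assumes fin: "finite I" and ne: "I \<noteq> {}" and sub: "I \<subseteq> occs G T"
  shows "1 \<le> tail_start I"
proof (cases "earlier_occs I = {}")
  case False
  then obtain x where x: "x \<in> earlier_occs I" by blast
  then have "2 \<le> occ_end x" using sub earlier_occs_subset two_le_occ_end by blast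
  then show ?thesis using occ_end_le_tail_start[OF fin x] by simp
qed (use ne in \<open>simp add: tail_start_def last_end_def\<close>)

lemma tail_start_le_last_end:
  assumes fin: "finite I" and sub: "I \<subseteq> occs G T"
  shows "tail_start I \<le> last_end I"
proof (cases "earlier_occs I = {}")
  case True
  show ?thesis
  proof (cases "I = {}")
    case False
    then obtain x where "x \<in> I" by blast
    then have "2 \<le> last_end I"
      using sub two_le_occ_end occ_end_le_last_end[OF fin] by (meson le_trans subsetD)
    then show ?thesis using True False by (simp add: tail_start_def last_end_def)
  qed (simp add: tail_start_def)
next
  case False
  have "last_end (earlier_occs I) \<le> last_end I"
    using False finite_subset[OF earlier_occs_subset fin]
    by (intro last_end_le) (auto simp: earlier_occs_def)
  then show ?thesis using False earlier_occs_subset by (auto simp: tail_start_def)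
qed

definition distinguished :: "'a list \<Rightarrow> (nat \<times> nat) set \<Rightarrow> bool" where
  "distinguished T I \<longleftrightarrow> I \<subseteq> occs G T \<and> indecomposable T I \<and> cond_I T I \<and> cond_II G T I"

text \<open>One step of the construction of Anick chains: \<open>m'\<close> is a chain with linked relations \<open>L\<close>,
  and appending \<open>t\<close> links \<open>new\<close>. The last hypothesis says that \<open>new\<close> is the only relation
  in \<open>s @ t\<close>, where \<open>s\<close> is the tail of \<open>m'\<close>.\<close>

context
  fixes m' t :: "'a list" and L :: "(nat \<times> nat) set" and new :: "nat \<times> nat"
  assumes dist: "distinguished m' L" and fin: "finite L" and len: "length m' = last_end L"
    and t_ne: "t \<noteq> []"
    and new_occ: "new \<in> occs G (m' @ t)" and new_end: "occ_end new = length (m' @ t)"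
    and new_start: "tail_start L \<le> fst new" "fst new < length m'"
    and new_unique: "\<And>j. j \<in> occs G (m' @ t) \<Longrightarrow> tail_start L \<le> fst j \<Longrightarrow> j = new"
begin

private lemma L_sub: "L \<subseteq> occs G m'"
  using dist by (simp add: distinguished_def)

private lemma occ_end_L: "x \<in> L \<Longrightarrow> occ_end x \<le> length m'"
  using L_sub occ_end_le_length by blast

private lemma occ_end_L_less: "x \<in> L \<Longrightarrow> occ_end x < occ_end new"
  using occ_end_L[of x] t_ne new_end by (cases t) auto

private lemma new_notin: "new \<notin> L"
  using occ_end_L_less by blast

private lemma new_covers: "fst new \<le> k \<Longrightarrow> k + 1 < length (m' @ t) \<Longrightarrow> internal_edge k new"
  using new_end by (simp add: internal_edge_def occ_end_def)

lemma indecomposable_insert_last: "indecomposable (m' @ t) (insert new L)"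
  unfolding indecomposable_def
proof (intro allI impI)
  fix k assume k: "k + 1 < length (m' @ t)"
  show "\<exists>oc\<in>insert new L. internal_edge k oc"
  proof (cases "k + 1 < length m'")
    case True
    then show ?thesis using dist indecomposableD by (fastforce simp: distinguished_def)
  next
    case False
    then show ?thesis using new_start(2) new_covers k by simp
  qed
qed

private lemma private_edge_of_L:
  assumes jL: "j \<in> L"
  obtains k where "k + 1 < length (m' @ t)" and "\<forall>oc\<in>insert new L - {j}. \<not> internal_edge k oc"
proof -
  have ind: "indecomposable m' L" and cI: "cond_I m' L" using dist by (auto simp: distinguished_def)
  obtain k where k: "k + 1 < length m'" and jk: "internal_edge k j"
    and unc: "\<forall>oc\<in>L - {j}. \<not> internal_edge k oc"
    using cond_I_private_edge[OF ind cI jL] by blast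
  show thesis
  proof (cases "k < fst new")
    case True
    then have "\<not> internal_edge k new" by (simp add: internal_edge_def)
    then show thesis using that[of k] k unc by auto
  next
    case False
    text \<open>Then \<open>j\<close> reaches beyond the tail start, so it is the last relation of \<open>L\<close>, and
      the edge just before the tail start is covered by \<open>j\<close> alone.\<close>
    have "tail_start L + 2 \<le> occ_end j"
      using False new_start(1) jk by (simp add: internal_edge_def occ_end_def)
    then have "j \<notin> earlier_occs L" using occ_end_le_tail_start[OF fin] by fastforce
    then have ej: "occ_end j = length m'"
      using jL len occ_end_le_last_end[OF fin jL] by (simp add: earlier_occs_def)
    have t1: "1 \<le> tail_start L" using one_le_tail_start[OF fin _ L_sub] jL by blast
    have "\<not> internal_edge (tail_start L - 1) oc" if oc: "oc \<in> insert new L - {j}" for oc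
    proof (cases "oc = new")
      case True
      then show ?thesis using new_start(1) t1 by (simp add: internal_edge_def) linarith
    next
      case False
      then have ocL: "oc \<in> L" "oc \<noteq> j" using oc by auto
      then have "occ_end oc \<noteq> occ_end j" using occ_end_inj L_sub jL by blast
      then have "oc \<in> earlier_occs L"
        using ocL occ_end_le_last_end[OF fin ocL(1)] ej len by (simp add: earlier_occs_def)
      then have "occ_end oc \<le> tail_start L" using occ_end_le_tail_start[OF fin] by blast
      then show ?thesis using t1 by (simp add: internal_edge_def occ_end_def)
    qed
    moreover have "tail_start L - 1 + 1 < length (m' @ t)" using t1 new_start by simp
    ultimately show thesis using that by blast
  qed
qed

lemma cond_I_insert_last: "cond_I (m' @ t) (insert new L)"
  unfolding cond_I_def
proof
  fix j assume j: "j \<in> insert new L"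
  show "\<not> indecomposable (m' @ t) (insert new L - {j})"
  proof
    assume ind: "indecomposable (m' @ t) (insert new L - {j})"
    show False
    proof (cases "j = new")
      case True
      have "length (m' @ t) - 2 + 1 < length (m' @ t)"
        using new_end two_le_occ_end[OF new_occ] by simp
      then obtain oc where "oc \<in> L" "internal_edge (length (m' @ t) - 2) oc"
        using indecomposableD[OF ind] True by blast
      then show False
        using occ_end_L t_ne by (cases t) (fastforce simp: internal_edge_def occ_end_def)+
    next
      case False
      then obtain k where "k + 1 < length (m' @ t)" "\<forall>oc\<in>insert new L - {j}. \<not> internal_edge k oc"
        using j private_edge_of_L[of j] by blast
      then show False using indecomposableD[OF ind] by blast
    qed
  qed
qed

text \<open>The witness from \<open>m'\<close> still works, since \<open>new\<close> covers all edges beyond \<open>m'\<close>.\<close>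

private lemma cond_II_witness_prefix:
  assumes j: "j \<in> occs G m' - L"
  shows "\<exists>i\<in>insert new L. first_letter_less i j \<and> indecomposable (m' @ t) (insert j (insert new L) - {i})"
proof -
  obtain i where i: "i \<in> L" "first_letter_less i j" "indecomposable m' (insert j L - {i})"
    using dist j unfolding distinguished_def cond_II_def by blast
  have "indecomposable (m' @ t) (insert j (insert new L) - {i})"
    unfolding indecomposable_def
  proof (intro allI impI)
    fix k assume k: "k + 1 < length (m' @ t)"
    show "\<exists>oc\<in>insert j (insert new L) - {i}. internal_edge k oc"
    proof (cases "k + 1 < length m'")
      case True
      then show ?thesis using indecomposableD[OF i(3)] by blast
    next
      case False
      then have "internal_edge k new" using new_start(2) new_covers k by simp
      moreover have "new \<noteq> i" using i(1) new_notin by blast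
      ultimately show ?thesis by blast
    qed
  qed
  then show ?thesis using i by blast
qed

private lemma covered_before_tail_start:
  assumes l: "l \<in> L" "occ_end l = length m'" and k: "k + 1 < tail_start L"
  obtains oc where "oc \<in> L - {l}" and "internal_edge k oc"
proof -
  have "earlier_occs L \<noteq> {}" using k l(1) by (auto simp: tail_start_def last_end_def split: if_splits)
  then obtain l' where l'E: "l' \<in> earlier_occs L" and el': "occ_end l' = tail_start L"
    using last_end_attained[OF finite_subset[OF earlier_occs_subset fin]] l(1)
    by (metis empty_iff tail_start_def)
  have l'L: "l' \<in> L" using l'E earlier_occs_subset by blast
  have ell': "occ_end l' < occ_end l" using l'E l(2) len by (simp add: earlier_occs_def)
  then have fl': "fst l' < fst l" using occ_end_less_imp_fst_less L_sub l'L l(1) by blast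
  have "k + 1 < length m'" using k tail_start_le_last_end[OF fin L_sub] len by simp
  then obtain oc where oc: "oc \<in> L" "internal_edge k oc"
    using dist indecomposableD unfolding distinguished_def by blast
  show thesis
  proof (cases "oc = l")
    case True
    then have "internal_edge k l'" using oc fl' el' k by (simp add: internal_edge_def occ_end_def)
    then show thesis using that l'L ell' by blast
  qed (use that oc in blast)
qed

text \<open>An occurrence \<open>j\<close> reaching beyond \<open>m'\<close> starts before the tail start, so it overlaps the
  last relation \<open>l\<close> of \<open>L\<close>; together with the relations of \<open>L\<close> ending before the tail start,
  it covers the edges that \<open>l\<close> covered.\<close>

private lemma cond_II_witness_overlap:
  assumes j: "j \<in> occs G (m' @ t) - insert new L" and ej: "length m' < occ_end j"
  shows "\<exists>i\<in>insert new L. first_letter_less i j \<and> indecomposable (m' @ t) (insert j (insert new L) - {i})"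
proof -
  have jocc: "j \<in> occs G (m' @ t)" and jn: "j \<noteq> new" "j \<notin> L" using j by auto
  have fj: "fst j < tail_start L" using new_unique[OF jocc] jn by force
  have Lne: "L \<noteq> {}" using fj by (auto simp: tail_start_def)
  obtain l where lL: "l \<in> L" and el: "occ_end l = length m'"
    using last_end_attained[OF fin Lne] len by metis
  have locc: "l \<in> occs G (m' @ t)" using lL L_sub occs_append by blast
  have fl: "fst l < fst j" using occ_end_less_imp_fst_less[OF locc jocc] el ej by simp
  have "indecomposable (m' @ t) (insert j (insert new L) - {l})"
    unfolding indecomposable_def
  proof (intro allI impI)
    fix k assume k: "k + 1 < length (m' @ t)"
    consider "fst new \<le> k" | "k < fst new" "tail_start L \<le> k + 1" | "k + 1 < tail_start L"
      by linarith
    then show "\<exists>oc\<in>insert j (insert new L) - {l}. internal_edge k oc"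
    proof cases
      case 1
      then show ?thesis using new_covers k lL new_notin by blast
    next
      case 2
      then have "internal_edge k j" using fj new_start ej by (simp add: internal_edge_def occ_end_def)
      then show ?thesis using jn lL by blast
    next
      case 3
      then show ?thesis using covered_before_tail_start[OF lL el] by blast
    qed
  qed
  then show ?thesis using lL fl by (auto simp: first_letter_less_def)
qed

lemma cond_II_insert_last: "cond_II G (m' @ t) (insert new L)"
  unfolding cond_II_def
proof
  fix j assume j: "j \<in> occs G (m' @ t) - insert new L"
  show "\<exists>i\<in>insert new L. first_letter_less i j \<and> indecomposable (m' @ t) (insert j (insert new L) - {i})"
  proof (cases "occ_end j \<le> length m'")
    case True
    then have "j \<in> occs G m' - L" using j occs_appendD by blast
    then show ?thesis by (rule cond_II_witness_prefix)
  next
    case False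
    then show ?thesis using j by (intro cond_II_witness_overlap) auto
  qed
qed

lemma distinguished_insert_last: "distinguished (m' @ t) (insert new L)"
  using L_sub occs_append[of _ G m' t] new_occ indecomposable_insert_last cond_I_insert_last
    cond_II_insert_last
  unfolding distinguished_def by blast

end

lemma anick_chain_distinguished:
  assumes "anick_chain G q m t L"
  shows "distinguished m L \<and> finite L \<and> card L = q \<and> t = drop (tail_start L) m
    \<and> length m = last_end L"
  using assms
proof (induction rule: anick_chain.induct)
  case (zero x)
  then show ?case using occs_short[of "[x]"]
    by (simp add: distinguished_def indecomposable_def cond_I_def cond_II_def tail_start_def
        last_end_def)
next
  case (step q n s L t r)
  define new where "new = (length (n @ s @ t) - length r, length r)"
  from step.IH have dist: "distinguished (n @ s) L" and fin: "finite L" and card: "card L = q"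
    and s_eq: "s = drop (tail_start L) (n @ s)" and len: "length (n @ s) = last_end L"
    by auto
  have L_sub: "L \<subseteq> occs G (n @ s)" using dist by (simp add: distinguished_def)
  have "length s = length (n @ s) - tail_start L"
    using arg_cong[OF s_eq, of length] by (simp only: length_drop)
  moreover have "tail_start L \<le> length (n @ s)"
    using tail_start_le_last_end[OF fin L_sub] len by simp
  ultimately have n_len: "length n = tail_start L" by simp
  have r_len: "length r \<le> length (s @ t)" using step.hyps(4) by (rule suffix_length_le)
  have new_occ: "new \<in> occs G ((n @ s) @ t)"
    using suffix_occs[OF step.hyps(3), of "n @ s @ t"] step.hyps(4)
    by (simp add: new_def suffix_appendI)
  have new_end: "occ_end new = length ((n @ s) @ t)" using r_len by (simp add: new_def occ_end_def)
  have new_start: "tail_start L \<le> fst new" "fst new < length (n @ s)"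
    using r_len step.hyps(5) n_len by (auto simp: new_def)
  have "occs G (drop (tail_start L) ((n @ s) @ t)) = {(length (s @ t) - length r, length r)}"
    using step.hyps(6) n_len by simp
  then have new_unique: "j = new"
    if "j \<in> occs G ((n @ s) @ t)" and "tail_start L \<le> fst j" for j
    using occs_drop_singletonD[OF _ that] n_len r_len by (simp add: new_def)
  have ends_before: "occ_end x < occ_end new" if "x \<in> L" for x
    using occ_end_le_length[of x G "n @ s"] that L_sub new_end step.hyps(2) by (cases t) auto
  have "distinguished ((n @ s) @ t) (insert new L)"
    by (rule distinguished_insert_last[OF dist fin len step.hyps(2) new_occ new_end new_start
          new_unique])
  moreover have "card (insert new L) = Suc q"
    using ends_before[of new] fin card by (subst card_insert_disjoint) auto
  moreover have "tail_start (insert new L) = length (n @ s)"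
    using tail_start_insert_last[OF fin ends_before] len by simp
  moreover have "last_end (insert new L) = length ((n @ s) @ t)"
    using last_end_insert_last[OF fin ends_before] new_end by simp
  ultimately show ?case using fin by (simp add: new_def)
qed

lemma distinguished_last_occ:
  assumes dist: "distinguished T I" and ne: "I \<noteq> {}"
  obtains new where "new \<in> I" and "occ_end new = length T"
proof -
  have sub: "I \<subseteq> occs G T" and ind: "indecomposable T I" using dist by (auto simp: distinguished_def)
  obtain x where "x \<in> I" using ne by blast
  then have "2 \<le> length T" using sub two_le_occ_end occ_end_le_length by (meson le_trans subsetD)
  then have "length T - 2 + 1 < length T" by simp
  then obtain new where new: "new \<in> I" "internal_edge (length T - 2) new"
    using indecomposableD[OF ind] by blast
  then have "occ_end new = length T"
    using occ_end_le_length[of new G T] sub by (auto simp: internal_edge_def occ_end_def)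
  then show thesis using that new(1) by blast
qed

text \<open>Conversely, removing from a distinguished set the relation \<open>new\<close> ending at the last
  letter of \<open>T\<close> undoes such a step.\<close>

context
  fixes T :: "'a list" and I' :: "(nat \<times> nat) set" and new :: "nat \<times> nat"
  assumes dist: "distinguished T (insert new I')" and new_notin: "new \<notin> I'"
    and new_end: "occ_end new = length T"
begin

private lemma sub: "insert new I' \<subseteq> occs G T"
  using dist by (simp add: distinguished_def)

private lemma ind: "indecomposable T (insert new I')"
  using dist by (simp add: distinguished_def)

private lemma cI: "cond_I T (insert new I')"
  using dist by (simp add: distinguished_def)

private lemma fin: "finite I'"
  using finite_subset[OF sub finite_occs] by simp

private lemma new_occ: "new \<in> occs G T"
  using sub by simp

private lemma T_len: "2 \<le> length T"
  using two_le_occ_end[OF new_occ] new_end by simp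

private lemma ends_before:
  assumes "x \<in> I'"
  shows "occ_end x < length T"
proof -
  have x: "x \<in> occs G T" using assms sub by blast
  then have "occ_end x \<noteq> occ_end new" using occ_end_inj[OF _ new_occ] assms new_notin by blast
  then show ?thesis using occ_end_le_length[OF x] new_end by simp
qed

lemma last_end_less_length: "last_end I' < length T"
  using T_len ends_before last_end_attained[OF fin] by (cases "I' = {}") (auto simp: last_end_def, metis)

lemma tail_start_insert_new: "tail_start (insert new I') = last_end I'"
  using tail_start_insert_last[OF fin] ends_before new_end by simp

private lemma last_covers:
  assumes l: "l \<in> I'" "occ_end l = last_end I'"
    and k: "internal_edge k new" "k + 1 < last_end I'"
  shows "internal_edge k l"
proof -
  have "l \<in> occs G T" using l(1) sub by blast
  then have "fst l < fst new"
    using occ_end_less_imp_fst_less[OF _ new_occ] ends_before[OF l(1)] new_end by simp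
  then show ?thesis using k l by (simp add: internal_edge_def occ_end_def)
qed

private lemma fst_new_less: "fst new < last_end I'"
proof (cases "I' = {}")
  case True
  have "0 + 1 < length T" using T_len by simp
  then obtain oc where "oc \<in> insert new I'" "internal_edge 0 oc" using indecomposableD[OF ind] by blast
  then show ?thesis using True by (simp add: internal_edge_def last_end_def)
next
  case False
  then obtain l where l: "l \<in> I'" "occ_end l = last_end I'" using last_end_attained[OF fin] by blast
  have l2: "2 \<le> occ_end l" using l sub two_le_occ_end by blast
  then have "occ_end l - 1 + 1 < length T" using ends_before[OF l(1)] by simp
  then obtain x where x: "x \<in> insert new I'" "internal_edge (occ_end l - 1) x"
    using indecomposableD[OF ind] by blast
  then have "last_end I' < occ_end x" using l l2 by (auto simp: internal_edge_def occ_end_def)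
  then have "x = new" using x(1) occ_end_le_last_end[OF fin] by fastforce
  then show ?thesis using x(2) l l2 by (simp add: internal_edge_def) linarith
qed

text \<open>Were \<open>new\<close> to start before the tail start of \<open>I'\<close>, the last relation of \<open>I'\<close> would be
  covered by \<open>new\<close> and the one before it, contradicting condition (I).\<close>

private lemma tail_start_le_fst_new: "tail_start I' \<le> fst new"
proof (rule ccontr)
  assume less: "\<not> tail_start I' \<le> fst new"
  then have ne: "I' \<noteq> {}" by (auto simp: tail_start_def)
  obtain l where l: "l \<in> I'" "occ_end l = last_end I'" using last_end_attained[OF fin ne] by blast
  have locc: "l \<in> occs G T" using l sub by blast
  have lnew: "l \<noteq> new" using l new_notin by blast
  obtain k where k: "k + 1 < length T" "internal_edge k l"
    and unc: "\<forall>oc\<in>insert new I' - {l}. \<not> internal_edge k oc"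
    using cond_I_private_edge[OF ind cI] l(1) by blast
  have "occ_end l < occ_end new" using ends_before[OF l(1)] new_end by simp
  then have "\<not> fst new \<le> k" using unc k lnew by (auto simp: internal_edge_def occ_end_def)
  show False
  proof (cases "earlier_occs I' = {}")
    case True
    then have "fst new = 0" using less ne by (simp add: tail_start_def last_end_def)
    then show False using occ_nested_eq[OF new_occ locc] l ends_before new_end lnew by fastforce
  next
    case False
    then obtain l' where l': "l' \<in> earlier_occs I'" "occ_end l' = tail_start I'"
      using last_end_attained[OF finite_subset[OF earlier_occs_subset fin]] ne
      by (metis tail_start_def)
    have l'I': "l' \<in> I'" using l'(1) earlier_occs_subset by blast
    have "occ_end l' < occ_end l" using l'(1) l by (simp add: earlier_occs_def)
    moreover have "fst l' < fst l"
      using occ_end_less_imp_fst_less calculation l'I' l(1) sub by blast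
    ultimately have "internal_edge k l'"
      using k(2) l' less \<open>\<not> fst new \<le> k\<close> by (simp add: internal_edge_def occ_end_def)
    then show False using unc l'I' \<open>occ_end l' < occ_end l\<close> by blast
  qed
qed

private lemma fst_last_less_tail_start:
  assumes l: "l \<in> I'" "occ_end l = last_end I'"
  shows "fst l < tail_start I'"
proof -
  have b1: "1 \<le> tail_start I'" using one_le_tail_start[OF fin] l(1) sub by blast
  have "tail_start I' - 1 + 1 < length T"
    using b1 tail_start_le_fst_new fst_new_less last_end_less_length by simp
  then obtain x where x: "x \<in> insert new I'" "internal_edge (tail_start I' - 1) x"
    using indecomposableD[OF ind] by blast
  have "x \<noteq> new" using x(2) b1 tail_start_le_fst_new by (auto simp: internal_edge_def)
  then have xI': "x \<in> I'" using x(1) by blast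
  have "x \<notin> earlier_occs I'"
    using x(2) b1 occ_end_le_tail_start[OF fin] by (fastforce simp: internal_edge_def occ_end_def)
  then have "x = l" using not_earlier_occ_eq[OF _ fin l xI'] sub by blast
  then show ?thesis using x(2) b1 by (simp add: internal_edge_def) linarith
qed

private lemma fst_less_tail_start:
  assumes j: "j \<in> I'"
  shows "fst j < tail_start I'"
proof (rule ccontr)
  assume "\<not> fst j < tail_start I'"
  then have le: "tail_start I' \<le> fst j" by simp
  have ne: "I' \<noteq> {}" using j by blast
  obtain l where l: "l \<in> I'" "occ_end l = last_end I'" using last_end_attained[OF fin ne] by blast
  show False
  proof (cases "j \<in> earlier_occs I'")
    case True
    then have "occ_end j \<le> tail_start I'" by (rule occ_end_le_tail_start[OF fin])
    moreover have "2 \<le> snd j" using j sub two_le_occ_len by blast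
    ultimately show False using le by (simp add: occ_end_def)
  next
    case False
    then have "j = l" using not_earlier_occ_eq[OF _ fin l j] sub by blast
    then show False using fst_last_less_tail_start[OF l] le by simp
  qed
qed

text \<open>Otherwise the relation \<open>i\<close> that condition (II) provides for \<open>j\<close> would cover an edge
  before the tail start that no other relation covers, not even \<open>j\<close>.\<close>

private lemma fst_less_tail_start_outside:
  assumes j: "j \<in> occs G T - insert new I'"
  shows "fst j < tail_start I'"
proof (rule ccontr)
  assume "\<not> fst j < tail_start I'"
  then have le: "tail_start I' \<le> fst j" by simp
  obtain i where i: "i \<in> insert new I'" "first_letter_less i j"
    and indi: "indecomposable T (insert j (insert new I') - {i})"
    using dist j unfolding distinguished_def cond_II_def by blast
  have jocc: "j \<in> occs G T" using j by blast
  have "occ_end j \<noteq> occ_end new" using occ_end_inj[OF jocc new_occ] j by blast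
  then have "occ_end j < occ_end new" using occ_end_le_length[OF jocc] new_end by simp
  then have "fst j < fst new" using occ_end_less_imp_fst_less[OF jocc new_occ] by blast
  then have iI': "i \<in> I'" using i by (auto simp: first_letter_less_def)
  show False
  proof (cases "i \<in> earlier_occs I'")
    case True
    obtain k where k: "k + 1 < length T" "internal_edge k i"
      and unc: "\<forall>oc\<in>insert new I' - {i}. \<not> internal_edge k oc"
      using cond_I_private_edge[OF ind cI] iI' by blast
    have "k + 1 < tail_start I'"
      using k(2) occ_end_le_tail_start[OF fin True] by (simp add: internal_edge_def occ_end_def)
    then show False using indecomposableD[OF indi k(1)] unc le by (auto simp: internal_edge_def)
  next
    case False
    obtain l where l: "l \<in> I'" "occ_end l = last_end I'" using last_end_attained[OF fin] iI' by blast
    have il: "i = l" using not_earlier_occ_eq[OF _ fin l iI' False] sub by blast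
    have b1: "1 \<le> tail_start I'" using one_le_tail_start[OF fin] iI' sub by blast
    have "tail_start I' - 1 + 1 < length T"
      using b1 tail_start_le_fst_new fst_new_less last_end_less_length by simp
    then obtain y where y: "y \<in> insert j (insert new I') - {i}" "internal_edge (tail_start I' - 1) y"
      using indecomposableD[OF indi] by blast
    then have "y \<in> I' - {l}" using le b1 tail_start_le_fst_new il by (auto simp: internal_edge_def)
    then have "y \<in> earlier_occs I'" using not_earlier_occ_eq[OF _ fin l] sub by blast
    then have "occ_end y \<le> tail_start I'" by (rule occ_end_le_tail_start[OF fin])
    then show False using y(2) b1 by (simp add: internal_edge_def occ_end_def)
  qed
qed

lemma occs_drop_tail_start: "occs G (drop (tail_start I') T) = {(fst new - tail_start I', snd new)}"
proof (intro equalityI subsetI)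
  fix y assume "y \<in> {(fst new - tail_start I', snd new)}"
  then show "y \<in> occs G (drop (tail_start I') T)"
    using occs_drop[of "fst new" "snd new" G T] new_occ tail_start_le_fst_new by simp
next
  fix y assume y: "y \<in> occs G (drop (tail_start I') T)"
  obtain p l where yp: "y = (p, l)" by (cases y)
  have "tail_start I' \<le> length T" using tail_start_le_fst_new fst_new_less last_end_less_length by simp
  then have jocc: "(p + tail_start I', l) \<in> occs G T" using occs_dropD y yp by blast
  have "(p + tail_start I', l) = new"
    using fst_less_tail_start fst_less_tail_start_outside jocc by fastforce
  then show "y \<in> {(fst new - tail_start I', snd new)}" using yp by auto
qed

private lemma indecomposable_take: "indecomposable (take (last_end I') T) I'"
  unfolding indecomposable_def
proof (intro allI impI)
  fix k assume "k + 1 < length (take (last_end I') T)"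
  then have kl: "k + 1 < last_end I'" using last_end_less_length by simp
  then have "I' \<noteq> {}" by (auto simp: last_end_def)
  then obtain l where l: "l \<in> I'" "occ_end l = last_end I'" using last_end_attained[OF fin] by blast
  have "k + 1 < length T" using kl last_end_less_length by simp
  then obtain x where "x \<in> insert new I'" "internal_edge k x"
    using indecomposableD[OF ind] by blast
  then show "\<exists>oc\<in>I'. internal_edge k oc" using last_covers[OF l _ kl] l(1) by blast
qed

private lemma cond_I_take: "cond_I (take (last_end I') T) I'"
  unfolding cond_I_def
proof
  fix j assume j: "j \<in> I'"
  obtain k where k: "k + 1 < length T" "internal_edge k j"
    and unc: "\<forall>oc\<in>insert new I' - {j}. \<not> internal_edge k oc"
    using cond_I_private_edge[OF ind cI] j by blast
  have "k + 1 < length (take (last_end I') T)"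
    using k(2) occ_end_le_last_end[OF fin j] last_end_less_length
    by (simp add: internal_edge_def occ_end_def)
  then show "\<not> indecomposable (take (last_end I') T) (I' - {j})"
    using unc indecomposableD by blast
qed

private lemma cond_II_take: "cond_II G (take (last_end I') T) I'"
  unfolding cond_II_def
proof
  fix j assume j: "j \<in> occs G (take (last_end I') T) - I'"
  have jocc: "j \<in> occs G T" using j occs_takeD by blast
  have ej: "occ_end j \<le> last_end I'"
    using j occ_end_le_length[of j G "take (last_end I') T"] last_end_less_length by simp
  then have fj: "fst j < fst new"
    using occ_end_less_imp_fst_less[OF jocc new_occ] last_end_less_length new_end by simp
  then have "j \<in> occs G T - insert new I'" using jocc j by auto
  then obtain i where i: "i \<in> insert new I'" "first_letter_less i j"
    and indi: "indecomposable T (insert j (insert new I') - {i})"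
    using dist unfolding distinguished_def cond_II_def by blast
  then have iI': "i \<in> I'" using fj by (auto simp: first_letter_less_def)
  obtain l where l: "l \<in> I'" "occ_end l = last_end I'" using last_end_attained[OF fin] iI' by blast
  have "i \<noteq> l"
  proof
    assume "i = l"
    then have "l = j" using occ_nested_eq[of l T j] i(2) l sub jocc ej
      by (auto simp: first_letter_less_def)
    then show False using j l by blast
  qed
  have "indecomposable (take (last_end I') T) (insert j I' - {i})"
    unfolding indecomposable_def
  proof (intro allI impI)
    fix k assume "k + 1 < length (take (last_end I') T)"
    then have kl: "k + 1 < last_end I'" using last_end_less_length by simp
    have "k + 1 < length T" using kl last_end_less_length by simp
    then obtain y where "y \<in> insert j (insert new I') - {i}" "internal_edge k y"
      using indecomposableD[OF indi] by blast
    then show "\<exists>oc\<in>insert j I' - {i}. internal_edge k oc"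
      using last_covers[OF l _ kl] l(1) \<open>i \<noteq> l\<close> by blast
  qed
  then show "\<exists>i\<in>I'. first_letter_less i j \<and> indecomposable (take (last_end I') T) (insert j I' - {i})"
    using iI' i(2) by blast
qed

lemma distinguished_take: "distinguished (take (last_end I') T) I'"
proof -
  have "I' \<subseteq> occs G (take (last_end I') T)"
    using sub occs_take occ_end_le_last_end[OF fin] by blast
  then show ?thesis using indecomposable_take cond_I_take cond_II_take
    by (simp add: distinguished_def)
qed

lemma anick_chain_insert_last:
  assumes chain: "anick_chain G q (take (last_end I') T) (drop (tail_start I') (take (last_end I') T)) I'"
  shows "anick_chain G (Suc q) T (drop (last_end I') T) (insert new I')"
proof -
  define m' where "m' = take (last_end I') T"
  define s where "s = drop (tail_start I') m'"
  define t where "t = drop (last_end I') T"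
  define r where "r = drop (fst new) T"
  have ts_le: "tail_start I' \<le> last_end I'" using tail_start_le_fst_new fst_new_less by simp
  have st: "s @ t = drop (tail_start I') T"
  proof -
    have "length m' = last_end I'" using last_end_less_length by (simp add: m'_def)
    then have "drop (tail_start I') (m' @ t) = s @ t"
      unfolding drop_append s_def using ts_le by simp
    then show ?thesis by (simp add: m'_def t_def)
  qed
  have r_len: "length r = snd new" using new_end by (simp add: r_def occ_end_def)
  have "r \<in> G" using new_occ r_len by (cases new) (simp add: occs_def r_def)
  moreover have "suffix r (s @ t)"
    using st tail_start_le_fst_new suffix_drop[of "fst new - tail_start I'" "drop (tail_start I') T"]
    by (simp add: r_def)
  moreover have "t \<noteq> []" and "length t < length r"
    using last_end_less_length fst_new_less by (auto simp: t_def r_def)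
  moreover have "occs G (s @ t) = {(length (s @ t) - length r, length r)}"
    using occs_drop_tail_start st r_len new_end by (simp add: occ_end_def)
  moreover have "anick_chain G q (take (tail_start I') m' @ s) s I'"
    using chain unfolding s_def append_take_drop_id by (simp add: m'_def)
  ultimately have step: "anick_chain G (Suc q) (take (tail_start I') m' @ s @ t) t
      (insert (length (take (tail_start I') m' @ s @ t) - length r, length r) I')"
    by (intro anick_chain.step)
  have word: "take (tail_start I') m' @ s @ t = T"
    unfolding append_assoc[symmetric] s_def append_take_drop_id by (simp add: t_def m'_def)
  have occ: "(length T - length r, length r) = new"
    using r_len new_end by (cases new) (simp add: occ_end_def)
  show ?thesis using step unfolding word occ by (simp only: t_def)
qed

end

lemma distinguished_anick_chain:
  assumes "T \<noteq> []" and "distinguished T I"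
  shows "anick_chain G (card I) T (drop (tail_start I) T) I"
  using assms
proof (induction "card I" arbitrary: T I rule: less_induct)
  case less
  show ?case
  proof (cases "I = {}")
    case True
    then have "\<not> 0 + 1 < length T"
      using less.prems(2) indecomposableD by (fastforce simp: distinguished_def)
    then obtain x where "T = [x]" using less.prems(1) by (cases T) auto
    then show ?thesis using True by (simp add: tail_start_def anick_chain.zero)
  next
    case False
    obtain new where new: "new \<in> I" "occ_end new = length T"
      using distinguished_last_occ[OF less.prems(2) False] by blast
    define I' where "I' = I - {new}"
    have I: "I = insert new I'" and new_notin: "new \<notin> I'" using new(1) by (auto simp: I'_def)
    have dist: "distinguished T (insert new I')" using less.prems(2) I by simp
    have fin: "finite I'" using dist finite_subset[OF _ finite_occs] by (auto simp: distinguished_def)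
    have "card I' < card I" using fin new_notin I by simp
    moreover have "take (last_end I') T \<noteq> []"
      using last_end_less_length[OF dist new_notin new(2)] one_le_last_end[OF fin, of T] dist I
      by (auto simp: distinguished_def)
    ultimately have "anick_chain G (card I') (take (last_end I') T)
        (drop (tail_start I') (take (last_end I') T)) I'"
      using less.hyps distinguished_take[OF dist new_notin new(2)] by blast
    then have "anick_chain G (Suc (card I')) T (drop (last_end I') T) I"
      using anick_chain_insert_last[OF dist new_notin new(2)] I by simp
    moreover have "tail_start I = last_end I'"
      using tail_start_insert_new[OF dist new_notin new(2)] I by simp
    ultimately show ?thesis using I fin new_notin by simp
  qed
qed

end

theorem mainTheorem4:
  fixes G :: "('a::finite) list set"
  assumes rel_len: "\<forall>w\<in>G. 2 \<le> length w"
      and minimal: "\<forall>u\<in>G. \<forall>w\<in>G. sublist u w \<longrightarrow> u = w"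
  shows "(\<forall>T. inj_on fst (occs G T) \<and> anick_numbering (occs G T) first_letter_less)
       \<and> (\<forall>T I q. T \<noteq> [] \<longrightarrow>
            ((I \<subseteq> occs G T \<and> indecomposable T I \<and> cond_I T I \<and> cond_II G T I \<and> card I = q)
             \<longleftrightarrow> (\<exists>t. anick_chain G q T t I)))"
proof -
  interpret anick_relations G using rel_len minimal by unfold_locales
  have "distinguished T I \<and> card I = q \<longleftrightarrow> (\<exists>t. anick_chain G q T t I)" if "T \<noteq> []" for T I q
    using distinguished_anick_chain[OF that] anick_chain_distinguished by blast
  then show ?thesis using inj_on_fst_occs anick_numbering_first_letter
    by (simp add: distinguished_def conj_assoc)
qed
end
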